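(* Let $r,m$ be positive integers with $m\ge20r$ and let $B=(T,D,\lambda)$ be an upwards closed quasi-bush with no coat hangers. If $\mathrm{wcol}_{9r}(B,\prec)\le m$ for some linear order $\prec$ on $V(T)$, and for every $w\in V(T)$ we have $|\mathrm{IN}(w,B)|\le m$ or $|\mathrm{OUT}(w,B)|\le m$, then $G(B)$ does not contain an $r$-shallow topological minor isomorphic to a clique on $m^{7}$ vertices.
   Context: A quasi-bush $B=(T,D,\lambda)$: a rooted tree $T$, a set $D$ of pointers from leaves of $T$ to nodes of $T$ (every leaf points to the root), and $\lambda\colon D\to\{0,1\}$. $v\le_T w$ means $v$ is an ancestor of $w$ (including $v=w$); $T(a)$ is the subtree of descendants of $a$. $G(B)$ is the directed graph on the leaves of $T$ where, for distinct leaves $u,v$ and $w$ the lowest ancestor of $v$ with $(u,w)\in D$, $(u,v)$ is an arc iff $\lambda((u,w))=1$; $w$ is the connection point of $(u,v)$. Quasi-bushes are assumed to represent undirected graphs, i.e., $G(B)$ is symmetric, and it is identified with the corresponding undirected graph. $B$ is upwards closed if $(u,w)\in D$ and $w'\le_T w$ imply $(u,w')\in D$. A coat hanger is a subtree $T(a)$ such that $a$ is neither the root nor a leaf, and some leaf $v$ has a pointer labeled $1$ to the parent of $a$ but no pointer to any node of $T(a)$. $\mathrm{IN}(w,B)$ (resp. $\mathrm{OUT}(w,B)$) is the set of all $u$ (resp. $v$) such that $w$ is the connection point of some arc $(u,v)$ of $G(B)$. $\mathrm{wcol}_{r}(B,\prec)$ is computed in the Gaifman graph of $B$ (vertex set $V(T)$,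 edges the tree edges and pointers): the maximum over $v$ of the number of $u$ such that some path of length at most $r$ from $v$ to $u$ has $u$ as its $\prec$-minimum. A graph $H$ is an $r$-shallow topological minor of $G$ if there are vertices $p(u)$, $u\in V(H)$, and internally vertex-disjoint paths of length at most $2r+1$ joining $p(u)$ and $p(v)$ for each edge $uv$ of $H$. *)

theory Defs
  imports Main
begin

text \<open>A quasi-bush B = (T, D, lambda). The rooted tree T is given by its node set,
  a parent function (irrelevant at the root) and the root. The label lambda
  takes values in bool, True standing for 1 and False for 0.\<close>

record 'a qbush =
  nodes  :: "'a set"
  parent :: "'a \<Rightarrow> 'a"
  root   :: 'a
  ptrs   :: "('a \<times> 'a) set"
  lab    :: "'a \<times> 'a \<Rightarrow> bool"

definition rooted_tree :: "'a qbush \<Rightarrow> bool" where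
  "rooted_tree B \<longleftrightarrow> finite (nodes B) \<and> root B \<in> nodes B \<and>
     (\<forall>v\<in>nodes B - {root B}. parent B v \<in> nodes B) \<and>
     (\<forall>v\<in>nodes B. \<exists>k. (parent B ^^ k) v = root B)"

definition anc :: "'a qbush \<Rightarrow> 'a \<Rightarrow> 'a \<Rightarrow> bool" where
  "anc B v w \<longleftrightarrow> w \<in> nodes B \<and>
     (\<exists>k. (parent B ^^ k) w = v \<and> (\<forall>i<k. (parent B ^^ i) w \<noteq> root B))"

definition is_leaf :: "'a qbush \<Rightarrow> 'a \<Rightarrow> bool" where
  "is_leaf B v \<longleftrightarrow> v \<in> nodes B \<and> \<not> (\<exists>c\<in>nodes B. c \<noteq> root B \<and> parent B c = v)"

definition quasi_bush :: "'a qbush \<Rightarrow> bool" where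
  "quasi_bush B \<longleftrightarrow> rooted_tree B \<and>
     ptrs B \<subseteq> {u. is_leaf B u} \<times> nodes B \<and>
     (\<forall>u. is_leaf B u \<longrightarrow> (u, root B) \<in> ptrs B)"

definition conn_point :: "'a qbush \<Rightarrow> 'a \<Rightarrow> 'a \<Rightarrow> 'a \<Rightarrow> bool" where
  "conn_point B u v w \<longleftrightarrow> anc B w v \<and> (u, w) \<in> ptrs B \<and>
     (\<forall>w'. anc B w' v \<and> (u, w') \<in> ptrs B \<longrightarrow> anc B w' w)"

definition arcG :: "'a qbush \<Rightarrow> 'a \<Rightarrow> 'a \<Rightarrow> bool" where
  "arcG B u v \<longleftrightarrow> is_leaf B u \<and> is_leaf B v \<and> u \<noteq> v \<and>
     (\<exists>w. conn_point B u v w \<and> lab B (u, w))"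

definition represents_undirected :: "'a qbush \<Rightarrow> bool" where
  "represents_undirected B \<longleftrightarrow> (\<forall>u v. arcG B u v \<longrightarrow> arcG B v u)"

definition upwards_closed :: "'a qbush \<Rightarrow> bool" where
  "upwards_closed B \<longleftrightarrow>
     (\<forall>u w w'. (u, w) \<in> ptrs B \<and> anc B w' w \<longrightarrow> (u, w') \<in> ptrs B)"

definition coat_hanger :: "'a qbush \<Rightarrow> 'a \<Rightarrow> bool" where
  "coat_hanger B a \<longleftrightarrow> a \<in> nodes B \<and> a \<noteq> root B \<and> \<not> is_leaf B a \<and>
     (\<exists>v. is_leaf B v \<and> (v, parent B a) \<in> ptrs B \<and> lab B (v, parent B a) \<and>
          (\<forall>x. anc B a x \<longrightarrow> (v, x) \<notin> ptrs B))"

definition IN :: "'a \<Rightarrow> 'a qbush \<Rightarrow> 'a set" where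
  "IN w B = {u. \<exists>v. arcG B u v \<and> conn_point B u v w}"

definition OUT :: "'a \<Rightarrow> 'a qbush \<Rightarrow> 'a set" where
  "OUT w B = {v. \<exists>u. arcG B u v \<and> conn_point B u v w}"

definition gaif_adj :: "'a qbush \<Rightarrow> 'a \<Rightarrow> 'a \<Rightarrow> bool" where
  "gaif_adj B x y \<longleftrightarrow> x \<in> nodes B \<and> y \<in> nodes B \<and> x \<noteq> y \<and>
     ((x \<noteq> root B \<and> parent B x = y) \<or> (y \<noteq> root B \<and> parent B y = x) \<or>
      (x, y) \<in> ptrs B \<or> (y, x) \<in> ptrs B)"

text \<open>u is weakly r-reachable from v w.r.t. the order le (reflexive form of \<prec>):
  some path of length at most r from v to u in the Gaifman graph has u as its minimum.\<close>
definition wreach :: "'a qbush \<Rightarrow> ('a \<times> 'a) set \<Rightarrow> nat \<Rightarrow> 'a \<Rightarrow> 'a \<Rightarrow> bool" where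
  "wreach B le r v u \<longleftrightarrow> (\<exists>xs. xs \<noteq> [] \<and> hd xs = v \<and> last xs = u \<and> distinct xs \<and>
     length xs \<le> r + 1 \<and> set xs \<subseteq> nodes B \<and>
     (\<forall>i. Suc i < length xs \<longrightarrow> gaif_adj B (xs ! i) (xs ! Suc i)) \<and>
     (\<forall>x\<in>set xs. (u, x) \<in> le))"

definition wcol :: "nat \<Rightarrow> 'a qbush \<Rightarrow> ('a \<times> 'a) set \<Rightarrow> nat" where
  "wcol r B le = Max ((\<lambda>v. card {u. wreach B le r v u}) ` nodes B)"

definition gpath :: "'a qbush \<Rightarrow> 'a list \<Rightarrow> bool" where
  "gpath B xs \<longleftrightarrow> xs \<noteq> [] \<and> distinct xs \<and> (\<forall>x\<in>set xs. is_leaf B x) \<and>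
     (\<forall>i. Suc i < length xs \<longrightarrow> arcG B (xs ! i) (xs ! Suc i))"

definition interior :: "'a list \<Rightarrow> 'a set" where
  "interior xs = set (butlast (tl xs))"

text \<open>G(B) contains an r-shallow topological minor isomorphic to the clique K_n:
  distinct branch vertices p i (i < n) and, for each pair i < j, a path of length
  at most 2r+1 from p i to p j; the paths are internally vertex-disjoint, i.e. an
  interior vertex of one path lies on no other path.\<close>
definition has_shallow_top_clique :: "'a qbush \<Rightarrow> nat \<Rightarrow> nat \<Rightarrow> bool" where
  "has_shallow_top_clique B r n \<longleftrightarrow> (\<exists>(p :: nat \<Rightarrow> 'a) (P :: nat \<Rightarrow> nat \<Rightarrow> 'a list).
     inj_on p {..<n} \<and> (\<forall>i<n. is_leaf B (p i)) \<and>
     (\<forall>i j. i < j \<and> j < n \<longrightarrow> gpath B (P i j) \<and> hd (P i j) = p i \<and>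
        last (P i j) = p j \<and> length (P i j) \<le> 2 * r + 2) \<and>
     (\<forall>i j k l. i < j \<and> j < n \<and> k < l \<and> l < n \<and> (i, j) \<noteq> (k, l) \<longrightarrow>
        interior (P i j) \<inter> set (P k l) = {}))"

end

theory Submission
  imports Defs
begin

text \<open>In an upwards closed quasi-bush without coat hangers, the connection point of an
  arc (u, v) of G(B) is v or the parent of v, so u, the connection point and v form a walk
  in the Gaifman graph. Hence a path Q of G(B) of length at most 2r + 1 lifts to a Gaifman
  walk of length at most 4r + 3 through the vertices and connection points of Q, and the
  \<prec>-least vertex z of this walk is weakly 9r-reachable from both ends of Q. Moreover Q
  meets {z} \<union> S(z), where S(z) is the smaller of IN(z, B) and OUT(z, B): either z lies on
  Q, or z is the connection point of an arc (x, y) of Q, and then x \<in> IN(z, B) and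
  y \<in> OUT(z, B).

  Call the clique path from p(a) to p(c) good for a if it meets {z} \<union> S(z) in a vertex
  other than p(a), for some z weakly 9r-reachable from p(a). Since the paths from p(a) meet
  only in p(a), that vertex determines the path, so p(a) has at most m(m + 1) good paths.
  Every path is good for one of its ends, so a clique on n branch vertices has
  n \<le> 2m(m + 1) + 1, which fails for n = m^7.\<close>

lemma linear_order_on_has_least:
  assumes "linear_order_on A le" "finite S" "S \<noteq> {}" "S \<subseteq> A"
  shows "\<exists>x\<in>S. \<forall>y\<in>S. (x, y) \<in> le"
  using assms(2-4)
proof (induction S rule: finite_ne_induct)
  case (singleton x)
  then show ?case using assms(1) by (auto simp: order_on_defs refl_on_def)
next
  case (insert x F)
  then obtain z where z: "z \<in> F" "\<forall>y\<in>F. (z, y) \<in> le" by auto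
  have "x \<in> A" "z \<in> A" using insert.prems z(1) by auto
  then have "(x, x) \<in> le" "trans le"
    using assms(1) unfolding order_on_defs refl_on_def by auto
  moreover have "(x, z) \<in> le \<or> (z, x) \<in> le"
    using assms(1) \<open>x \<in> A\<close> \<open>z \<in> A\<close> \<open>(x, x) \<in> le\<close>
    unfolding order_on_defs total_on_def by (cases "x = z") auto
  ultimately show ?case using z by (blast dest: transD)
qed

lemma successively_distinct_sublist:
  "successively P xs \<Longrightarrow> xs \<noteq> [] \<Longrightarrow> \<exists>ys. successively P ys \<and> distinct ys \<and> ys \<noteq> [] \<and>
     hd ys = hd xs \<and> last ys = last xs \<and> set ys \<subseteq> set xs \<and> length ys \<le> length xs"
proof (induction xs rule: length_induct)
  case (1 xs)
  show ?case
  proof (cases "distinct xs")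
    case True
    then show ?thesis using 1 by blast
  next
    case False
    then obtain as y bs cs where xs: "xs = as @ [y] @ bs @ [y] @ cs"
      using not_distinct_decomp by blast
    define xs' where "xs' = as @ [y] @ cs"
    have "successively P xs'" using "1.prems"(1) unfolding xs xs'_def
      by (auto simp: successively_append_iff successively_Cons)
    moreover have "length xs' < length xs" "xs' \<noteq> []" unfolding xs xs'_def by simp_all
    moreover have "hd xs' = hd xs" "last xs' = last xs" "set xs' \<subseteq> set xs"
      unfolding xs xs'_def by (auto simp: hd_append)
    ultimately show ?thesis using "1.IH" by fastforce
  qed
qed

lemma set_subset_ends_interior: "xs \<noteq> [] \<Longrightarrow> set xs \<subseteq> {hd xs, last xs} \<union> interior xs"
proof (induction xs rule: rev_induct)
  case (snoc x xs)
  then show ?case by (cases xs) (auto simp: interior_def butlast_append)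
qed simp

lemma semicomplete_card_le:
  assumes fin: "finite A" and out_deg: "\<And>a. a \<in> A \<Longrightarrow> card {c \<in> A. G a c} \<le> K"
    and semicomplete: "\<And>a c. a \<in> A \<Longrightarrow> c \<in> A \<Longrightarrow> a \<noteq> c \<Longrightarrow> G a c \<or> G c a"
  shows "card A \<le> 2 * K + 1"
proof -
  define E where "E = Sigma A (\<lambda>a. {c \<in> A. G a c})"
  have "card E = (\<Sum>a\<in>A. card {c \<in> A. G a c})"
    unfolding E_def using fin by (simp add: card_SigmaI)
  also have "\<dots> \<le> card A * K"
    using sum_bounded_above[of A "\<lambda>a. card {c \<in> A. G a c}" K] out_deg by simp
  finally have card_E: "card E \<le> card A * K" .
  have "card (Id_on A) = card A"
    unfolding Id_on_def by (subst card_UN_disjoint) (use fin in auto)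
  then have card_offdiag: "card (A \<times> A - Id_on A) = card A * card A - card A"
    using fin Id_on_subset_Times[of A] finite_subset[OF Id_on_subset_Times[of A]]
    by (simp add: card_Diff_subset card_cartesian_product)
  have "A \<times> A - Id_on A \<subseteq> E \<union> E\<inverse>"
    unfolding E_def using semicomplete by (auto simp: Id_on_def)
  then have "card (A \<times> A - Id_on A) \<le> card (E \<union> E\<inverse>)"
    by (rule card_mono[rotated]) (simp add: E_def fin)
  also have "\<dots> \<le> 2 * card E"
    using card_Un_le[of E "E\<inverse>"] by simp
  finally have "card A * card A - card A \<le> 2 * (card A * K)"
    using card_E card_offdiag by simp
  then have "card A * (card A - 1) \<le> card A * (2 * K)"
    by (simp add: algebra_simps diff_mult_distrib2)
  then show ?thesis
    by (cases "card A = 0") auto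
qed

lemma quadratic_lt_pow_seven:
  fixes m :: nat
  assumes "2 \<le> m"
  shows "2 * (m * (m + 1)) + 1 < m ^ 7"
proof -
  have "2 * m \<le> m * m" using assms by simp
  moreover have "2 * (m * (m + 1)) + 1 = 2 * (m * m) + 2 * m + 1" by (simp add: algebra_simps)
  ultimately have "2 * (m * (m + 1)) + 1 < 32 * (m * m)" using assms by linarith
  also have "\<dots> \<le> m ^ 5 * (m * m)" using power_mono[OF assms, of 5] by simp
  also have "\<dots> = m ^ 7" by (simp add: power_numeral_reduce)
  finally show ?thesis .
qed

lemma parent_funpow_in_nodes:
  assumes "rooted_tree B" "v \<in> nodes B" "\<forall>i<k. (parent B ^^ i) v \<noteq> root B"
  shows "(parent B ^^ k) v \<in> nodes B"
  using assms(3)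
proof (induction k)
  case 0
  show ?case using assms(2) by simp
next
  case (Suc k)
  then show ?case using assms(1) unfolding rooted_tree_def by auto
qed

lemma not_anc_parent:
  assumes "rooted_tree B" "a \<in> nodes B" "a \<noteq> root B"
  shows "\<not> anc B a (parent B a)"
proof
  assume "anc B a (parent B a)"
  then obtain j where j: "(parent B ^^ j) (parent B a) = a"
    and below_root: "\<forall>i<j. (parent B ^^ i) (parent B a) \<noteq> root B"
    unfolding anc_def by blast
  have cycle: "(parent B ^^ Suc j) a = a"
    using j by (simp add: funpow_Suc_right del: funpow.simps)
  have not_root: "(parent B ^^ t) a \<noteq> root B" if "t \<le> j" for t
    using that assms(3) below_root
    by (cases t) (auto simp: funpow_Suc_right simp del: funpow.simps)
  obtain k where "(parent B ^^ k) a = root B"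
    using assms(1,2) unfolding rooted_tree_def by blast
  then have "(parent B ^^ (k mod Suc j)) a = root B"
    using funpow_mod_eq[OF cycle] by simp
  then show False
    using not_root[of "k mod Suc j"] by simp
qed

lemma leaf_in_nodes: "is_leaf B v \<Longrightarrow> v \<in> nodes B"
  unfolding is_leaf_def by simp

lemma conn_point_eq_or_parent:
  assumes qb: "quasi_bush B" and uc: "upwards_closed B" and no_ch: "\<forall>a. \<not> coat_hanger B a"
    and "is_leaf B u" "v \<in> nodes B" and cp: "conn_point B u v w" and "lab B (u, w)"
  shows "w = v \<or> (v \<noteq> root B \<and> parent B v = w)"
proof -
  have rt: "rooted_tree B" using qb unfolding quasi_bush_def by simp
  obtain k where k: "(parent B ^^ k) v = w" and below_root: "\<forall>i<k. (parent B ^^ i) v \<noteq> root B"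
    using cp unfolding conn_point_def anc_def by blast
  have uw: "(u, w) \<in> ptrs B" using cp unfolding conn_point_def by blast
  show ?thesis
  proof (cases "k \<le> 1")
    case True
    then show ?thesis using k below_root by (cases k) auto
  next
    case False
    txt \<open>Then w has a child a on the way to v which is an inner node. As T(a) is no coat
      hanger, u points into T(a), hence to a by upwards closure, contradicting the minimality
      of w.\<close>
    define j where "j = k - 2"
    have kj: "k = Suc (Suc j)" using False unfolding j_def by simp
    define c where "c = (parent B ^^ j) v"
    define a where "a = parent B c"
    have c: "c \<in> nodes B" "c \<noteq> root B"
      using parent_funpow_in_nodes[OF rt \<open>v \<in> nodes B\<close>, of j] below_root kj unfolding c_def by auto
    have a: "a \<in> nodes B" "a \<noteq> root B" "parent B a = w"
      using parent_funpow_in_nodes[OF rt \<open>v \<in> nodes B\<close>, of "Suc j"] below_root k kj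
      unfolding a_def c_def by auto
    have "\<not> is_leaf B a" using c unfolding is_leaf_def a_def by blast
    then obtain x where "anc B a x" "(u, x) \<in> ptrs B"
      using no_ch assms(4,7) uw a unfolding coat_hanger_def by blast
    then have "(u, a) \<in> ptrs B" using uc unfolding upwards_closed_def by blast
    moreover have "anc B a v"
      unfolding anc_def a_def c_def using \<open>v \<in> nodes B\<close> below_root kj
      by (auto intro!: exI[of _ "Suc j"])
    ultimately have "anc B a (parent B a)" using cp a(3) unfolding conn_point_def by blast
    then show ?thesis using not_anc_parent[OF rt a(1,2)] by blast
  qed
qed

lemma gaif_adj_sym: "gaif_adj B x y \<Longrightarrow> gaif_adj B y x"
  unfolding gaif_adj_def by auto

lemma wreach_if_walk:
  assumes "successively (gaif_adj B)\<^sup>=\<^sup>= xs" "xs \<noteq> []" "set xs \<subseteq> nodes B"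
    "\<forall>x\<in>set xs. (last xs, x) \<in> le" "length xs \<le> d + 1"
  shows "wreach B le d (hd xs) (last xs)"
proof -
  obtain ys where ys: "successively (gaif_adj B)\<^sup>=\<^sup>= ys" "distinct ys" "ys \<noteq> []"
    "hd ys = hd xs" "last ys = last xs" "set ys \<subseteq> set xs" "length ys \<le> length xs"
    using successively_distinct_sublist[OF assms(1,2)] by blast
  have "gaif_adj B (ys ! i) (ys ! Suc i)" if "Suc i < length ys" for i
    using successively_nth[OF ys(1) that] ys(2) that by (simp add: nth_eq_iff_index_eq)
  then show ?thesis
    unfolding wreach_def using ys assms(3-5) by (intro exI[of _ ys]) auto
qed

lemma wreach_from_walk_ends:
  assumes walk: "successively (gaif_adj B)\<^sup>=\<^sup>= xs" and "set xs \<subseteq> nodes B" "u \<in> set xs"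
    and least: "\<forall>x\<in>set xs. (u, x) \<in> le" and "length xs \<le> d + 1"
  shows "wreach B le d (hd xs) u" "wreach B le d (last xs) u"
proof -
  obtain as bs where xs: "xs = as @ u # bs" using split_list[OF \<open>u \<in> set xs\<close>] by blast
  show "wreach B le d (hd xs) u"
    using wreach_if_walk[of B "as @ [u]" le d] walk assms(2,5) least
    unfolding xs by (auto simp: successively_append_iff hd_append)
  have "successively (gaif_adj B)\<^sup>=\<^sup>= (u # bs)"
    using walk unfolding xs by (simp add: successively_append_iff)
  then have "successively (gaif_adj B)\<^sup>=\<^sup>= (rev (u # bs))"
    unfolding successively_rev by (rule successively_mono) (auto intro: gaif_adj_sym)
  then show "wreach B le d (last xs) u"
    using wreach_if_walk[of B "rev (u # bs)" le d] assms(2,5) least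
    unfolding xs by (auto simp: hd_rev)
qed

lemma wreach_in_nodes: "wreach B le d v u \<Longrightarrow> u \<in> nodes B"
  unfolding wreach_def by auto

lemma card_wreach_le_wcol:
  "finite (nodes B) \<Longrightarrow> v \<in> nodes B \<Longrightarrow> card {u. wreach B le d v u} \<le> wcol d B le"
  unfolding wcol_def by (rule Max_ge) auto

lemma gpath_successively_arcG: "gpath B Q \<Longrightarrow> successively (arcG B) Q"
  unfolding gpath_def successively_conv_nth by blast

definition arc_conn_point :: "'a qbush \<Rightarrow> 'a \<Rightarrow> 'a \<Rightarrow> 'a" where
  "arc_conn_point B u v = (SOME w. conn_point B u v w \<and> lab B (u, w))"

lemma arc_conn_point_conn_point:
  "arcG B u v \<Longrightarrow> conn_point B u v (arc_conn_point B u v) \<and> lab B (u, arc_conn_point B u v)"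
  unfolding arc_conn_point_def arcG_def by (rule someI_ex) blast

lemma arc_conn_point_in_nodes:
  assumes "quasi_bush B" "arcG B u v"
  shows "arc_conn_point B u v \<in> nodes B"
  using arc_conn_point_conn_point[OF assms(2)] assms(1)
  unfolding conn_point_def quasi_bush_def by blast

lemma arc_conn_point_adjacent:
  assumes "quasi_bush B" "upwards_closed B" "\<forall>a. \<not> coat_hanger B a" and uv: "arcG B u v"
  defines "w \<equiv> arc_conn_point B u v"
  shows "(gaif_adj B)\<^sup>=\<^sup>= u w" "(gaif_adj B)\<^sup>=\<^sup>= w v"
proof -
  have leaves: "is_leaf B u" "is_leaf B v" using uv unfolding arcG_def by auto
  have cp: "conn_point B u v w" "lab B (u, w)"
    using arc_conn_point_conn_point[OF uv] unfolding w_def by auto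
  have w: "w \<in> nodes B" using arc_conn_point_in_nodes[OF assms(1) uv] unfolding w_def .
  show "(gaif_adj B)\<^sup>=\<^sup>= u w"
    using cp(1) w leaf_in_nodes[OF leaves(1)] unfolding gaif_adj_def conn_point_def by auto
  show "(gaif_adj B)\<^sup>=\<^sup>= w v"
    using conn_point_eq_or_parent[OF assms(1-3) leaves(1) leaf_in_nodes[OF leaves(2)] cp]
      w leaf_in_nodes[OF leaves(2)] unfolding gaif_adj_def by auto
qed

text \<open>The connection point of an arc (u, v) may be v itself, so lifted paths are walks for
  the reflexive closure of the Gaifman adjacency.\<close>

fun lift_path :: "'a qbush \<Rightarrow> 'a list \<Rightarrow> 'a list" where
  "lift_path B (x # y # xs) = x # arc_conn_point B x y # lift_path B (y # xs)"
| "lift_path B xs = xs"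

lemma lift_path_eq_Nil_iff [simp]: "lift_path B Q = [] \<longleftrightarrow> Q = []"
  by (induction B Q rule: lift_path.induct) auto

lemma hd_lift_path [simp]: "hd (lift_path B Q) = hd Q"
  by (induction B Q rule: lift_path.induct) auto

lemma last_lift_path [simp]: "last (lift_path B Q) = last Q"
  by (induction B Q rule: lift_path.induct) auto

lemma length_lift_path: "length (lift_path B Q) \<le> 2 * length Q"
  by (induction B Q rule: lift_path.induct) auto

lemma set_lift_path:
  "successively (arcG B) Q \<Longrightarrow> z \<in> set (lift_path B Q) \<Longrightarrow>
     z \<in> set Q \<or> (\<exists>x y. x \<in> set Q \<and> y \<in> set Q \<and> arcG B x y \<and> z = arc_conn_point B x y)"
  by (induction B Q rule: lift_path.induct) fastforce+

lemma lift_path_walk: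
  assumes "quasi_bush B" "upwards_closed B" "\<forall>a. \<not> coat_hanger B a"
  shows "successively (arcG B) Q \<Longrightarrow> successively (gaif_adj B)\<^sup>=\<^sup>= (lift_path B Q)"
proof (induction Q rule: induct_list012)
  case (3 x y xs)
  then have "arcG B x y" "successively (arcG B) (y # xs)" by auto
  then show ?case
    using 3 arc_conn_point_adjacent[OF assms \<open>arcG B x y\<close>] by (simp add: successively_Cons)
qed auto

lemma set_lift_path_subset_nodes:
  assumes "quasi_bush B" "gpath B Q"
  shows "set (lift_path B Q) \<subseteq> nodes B"
proof
  fix x assume "x \<in> set (lift_path B Q)"
  from set_lift_path[OF gpath_successively_arcG[OF assms(2)] this] show "x \<in> nodes B"
    using assms(2) unfolding gpath_def
    by (auto intro: leaf_in_nodes arc_conn_point_in_nodes[OF assms(1)])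
qed

definition thin_side :: "'a \<Rightarrow> 'a qbush \<Rightarrow> 'a set" where
  "thin_side z B = (if card (IN z B) \<le> card (OUT z B) then IN z B else OUT z B)"

lemma card_thin_side_le:
  "card (IN z B) \<le> m \<or> card (OUT z B) \<le> m \<Longrightarrow> card (thin_side z B) \<le> m"
  unfolding thin_side_def by auto

lemma IN_subset_nodes: "IN w B \<subseteq> nodes B"
  unfolding IN_def arcG_def is_leaf_def by auto

lemma OUT_subset_nodes: "OUT w B \<subseteq> nodes B"
  unfolding OUT_def arcG_def is_leaf_def by auto

lemma thin_side_subset_nodes: "thin_side w B \<subseteq> nodes B"
  unfolding thin_side_def by (simp add: IN_subset_nodes OUT_subset_nodes)

lemma arc_end_in_thin_side:
  assumes "arcG B x y"
  shows "x \<in> thin_side (arc_conn_point B x y) B \<or> y \<in> thin_side (arc_conn_point B x y) B"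
proof -
  have "x \<in> IN (arc_conn_point B x y) B" "y \<in> OUT (arc_conn_point B x y) B"
    using assms arc_conn_point_conn_point[OF assms] unfolding IN_def OUT_def by auto
  then show ?thesis unfolding thin_side_def by simp
qed

lemma path_meets_thin_side:
  assumes qb: "quasi_bush B" and uc: "upwards_closed B" and no_ch: "\<forall>a. \<not> coat_hanger B a"
    and le: "linear_order_on (nodes B) le" and Q: "gpath B Q" and len: "2 * length Q \<le> d + 1"
  shows "\<exists>z. wreach B le d (hd Q) z \<and> wreach B le d (last Q) z \<and>
    (\<exists>y\<in>set Q. y \<in> insert z (thin_side z B))"
proof -
  define W where "W = lift_path B Q"
  have arcs: "successively (arcG B) Q" using gpath_successively_arcG[OF Q] .
  have "Q \<noteq> []" using Q unfolding gpath_def by blast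
  have walk: "successively (gaif_adj B)\<^sup>=\<^sup>= W"
    unfolding W_def using lift_path_walk[OF qb uc no_ch arcs] .
  have W_nodes: "set W \<subseteq> nodes B"
    unfolding W_def using set_lift_path_subset_nodes[OF qb Q] .
  obtain z where z: "z \<in> set W" "\<forall>y\<in>set W. (z, y) \<in> le"
    using linear_order_on_has_least[OF le _ _ W_nodes] \<open>Q \<noteq> []\<close> unfolding W_def by auto
  have "length W \<le> d + 1" using length_lift_path[of B Q] len unfolding W_def by linarith
  then have "wreach B le d (hd Q) z" "wreach B le d (last Q) z"
    using wreach_from_walk_ends[OF walk W_nodes z] unfolding W_def by simp_all
  moreover consider "z \<in> set Q"
    | x y where "x \<in> set Q" "y \<in> set Q" "arcG B x y" "z = arc_conn_point B x y"
    using set_lift_path[OF arcs] z(1) unfolding W_def by blast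
  then have "\<exists>y\<in>set Q. y \<in> insert z (thin_side z B)"
    by cases (auto dest: arc_end_in_thin_side)
  ultimately show ?thesis by blast
qed

definition hits_thin_side :: "'a qbush \<Rightarrow> ('a \<times> 'a) set \<Rightarrow> nat \<Rightarrow> 'a \<Rightarrow> 'a list \<Rightarrow> bool" where
  "hits_thin_side B le d x P \<longleftrightarrow>
     (\<exists>y\<in>set P - {x}. \<exists>z. wreach B le d x z \<and> y \<in> insert z (thin_side z B))"

lemma path_hits_thin_side_at_an_end:
  assumes "quasi_bush B" "upwards_closed B" "\<forall>a. \<not> coat_hanger B a"
    and "linear_order_on (nodes B) le" "gpath B P" "2 * length P \<le> d + 1" "hd P \<noteq> last P"
  shows "hits_thin_side B le d (hd P) P \<or> hits_thin_side B le d (last P) P"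
proof -
  obtain z y where "wreach B le d (hd P) z" "wreach B le d (last P) z"
    "y \<in> set P" "y \<in> insert z (thin_side z B)"
    using path_meets_thin_side[OF assms(1-6)] by blast
  then show ?thesis
    using assms(7) unfolding hits_thin_side_def by (cases "y = hd P") auto
qed

lemma card_wreach_thin_sides_le:
  assumes "quasi_bush B" "v \<in> nodes B" "wcol d B le \<le> m"
    and thin: "\<forall>w\<in>nodes B. card (IN w B) \<le> m \<or> card (OUT w B) \<le> m"
  shows "card (\<Union>z\<in>{u. wreach B le d v u}. insert z (thin_side z B)) \<le> m * (m + 1)"
proof -
  define R where "R = {u. wreach B le d v u}"
  have fin: "finite (nodes B)" using assms(1) unfolding quasi_bush_def rooted_tree_def by simp
  have R_nodes: "R \<subseteq> nodes B" unfolding R_def using wreach_in_nodes by auto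
  have "card (\<Union>z\<in>R. insert z (thin_side z B)) \<le> (\<Sum>z\<in>R. card (insert z (thin_side z B)))"
    by (rule card_UN_le) (use fin R_nodes in \<open>auto intro: finite_subset\<close>)
  also have "\<dots> \<le> card R * (m + 1)"
  proof -
    have "card (insert z (thin_side z B)) \<le> m + 1" if "z \<in> R" for z
    proof -
      have "card (thin_side z B) \<le> m"
        by (rule card_thin_side_le) (use thin R_nodes that in blast)
      moreover have "finite (thin_side z B)"
        using fin thin_side_subset_nodes by (rule finite_subset[rotated])
      ultimately show ?thesis by (simp add: card_insert_if)
    qed
    then show ?thesis
      using sum_bounded_above[of R "\<lambda>z. card (insert z (thin_side z B))" "m + 1"] by simp
  qed
  also have "\<dots> \<le> m * (m + 1)"
    using card_wreach_le_wcol[OF fin assms(2), of le d] assms(3) unfolding R_def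
    by (intro mult_right_mono) auto
  finally show ?thesis unfolding R_def .
qed

lemma card_hits_thin_side_le:
  assumes "quasi_bush B" "x \<in> nodes B" "wcol d B le \<le> m"
    and "\<forall>w\<in>nodes B. card (IN w B) \<le> m \<or> card (OUT w B) \<le> m"
    and meet: "\<And>c c'. c \<in> C \<Longrightarrow> c' \<in> C \<Longrightarrow> c \<noteq> c' \<Longrightarrow> set (Q c) \<inter> set (Q c') \<subseteq> {x}"
    and hits: "\<And>c. c \<in> C \<Longrightarrow> hits_thin_side B le d x (Q c)"
  shows "card C \<le> m * (m + 1)"
proof -
  define U where "U = (\<Union>z\<in>{u. wreach B le d x u}. insert z (thin_side z B))"
  have "\<forall>c\<in>C. \<exists>y. y \<in> set (Q c) - {x} \<and> y \<in> U"
    using hits unfolding hits_thin_side_def U_def by blast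
  then obtain y where y: "\<forall>c\<in>C. y c \<in> set (Q c) - {x} \<and> y c \<in> U"
    by (rule bchoice[elim_format]) blast
  have "inj_on y C"
  proof (rule inj_onI, rule ccontr)
    fix c c' assume "c \<in> C" "c' \<in> C" "y c = y c'" "c \<noteq> c'"
    then show False using meet[of c c'] y by auto
  qed
  moreover have "finite U"
    using \<open>quasi_bush B\<close> unfolding quasi_bush_def rooted_tree_def U_def
    by (auto intro: finite_subset dest: wreach_in_nodes thin_side_subset_nodes[THEN subsetD])
  ultimately have "card C \<le> card U"
    using y by (intro card_inj_on_le) auto
  also have "\<dots> \<le> m * (m + 1)"
    unfolding U_def using card_wreach_thin_sides_le[OF assms(1-4)] .
  finally show ?thesis .
qed

lemma shallow_top_clique_paths:
  assumes "has_shallow_top_clique B r n"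
  obtains p Q where "inj_on p {..<n}" "\<And>a. a < n \<Longrightarrow> is_leaf B (p a)" "\<And>a c. Q a c = Q c a"
    "\<And>a c. a < n \<Longrightarrow> c < n \<Longrightarrow> a \<noteq> c \<Longrightarrow>
       gpath B (Q a c) \<and> length (Q a c) \<le> 2 * r + 2 \<and> {hd (Q a c), last (Q a c)} = {p a, p c}"
    "\<And>a c c'. a < n \<Longrightarrow> c < n \<Longrightarrow> c' < n \<Longrightarrow> a \<noteq> c \<Longrightarrow> a \<noteq> c' \<Longrightarrow> c \<noteq> c' \<Longrightarrow>
       set (Q a c) \<inter> set (Q a c') \<subseteq> {p a}"
proof -
  obtain p P where inj: "inj_on p {..<n}" and leaves: "\<forall>i<n. is_leaf B (p i)"
    and paths: "\<forall>i j. i < j \<and> j < n \<longrightarrow> gpath B (P i j) \<and> hd (P i j) = p i \<and>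
        last (P i j) = p j \<and> length (P i j) \<le> 2 * r + 2"
    and disjoint: "\<forall>i j k l. i < j \<and> j < n \<and> k < l \<and> l < n \<and> (i, j) \<noteq> (k, l) \<longrightarrow>
        interior (P i j) \<inter> set (P k l) = {}"
    using assms unfolding has_shallow_top_clique_def by (elim exE conjE) (rule that; assumption)
  define Q where "Q a c = P (min a c) (max a c)" for a c
  have Q_sym: "Q a c = Q c a" for a c
    unfolding Q_def by (simp add: min.commute max.commute)
  have Q_path: "gpath B (Q a c) \<and> length (Q a c) \<le> 2 * r + 2 \<and>
      {hd (Q a c), last (Q a c)} = {p a, p c}"
    if "a < n" "c < n" "a \<noteq> c" for a c
    using paths that unfolding Q_def by (cases "a < c") (auto simp: min_def max_def)
  have Q_disjoint: "interior (Q a c) \<inter> set (Q a c') = {}"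
    if "a < n" "c < n" "c' < n" "a \<noteq> c" "a \<noteq> c'" "c \<noteq> c'" for a c c'
    using disjoint that unfolding Q_def by (auto simp: min_def max_def split: if_splits)
  have Q_meet: "y = p c" if "a < n" "c < n" "c' < n" "a \<noteq> c" "a \<noteq> c'" "c \<noteq> c'"
    "y \<in> set (Q a c)" "y \<in> set (Q a c')" "y \<noteq> p a" for a c c' y
  proof -
    have "y \<notin> interior (Q a c)" using Q_disjoint[OF that(1-6)] that(8) by blast
    moreover have "Q a c \<noteq> []" using Q_path[OF that(1,2,4)] unfolding gpath_def by blast
    ultimately show ?thesis
      using set_subset_ends_interior[of "Q a c"] Q_path[OF that(1,2,4)] that(7,9) by auto
  qed
  have common: "set (Q a c) \<inter> set (Q a c') \<subseteq> {p a}"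
    if "a < n" "c < n" "c' < n" "a \<noteq> c" "a \<noteq> c'" "c \<noteq> c'" for a c c'
  proof
    fix y assume y: "y \<in> set (Q a c) \<inter> set (Q a c')"
    show "y \<in> {p a}"
    proof (rule ccontr)
      assume "y \<notin> {p a}"
      then have "y = p c" "y = p c'"
        using Q_meet[OF that] Q_meet[OF that(1,3,2,5,4) that(6)[symmetric]] y by auto
      then show False using inj that(2,3,6) by (auto dest: inj_onD)
    qed
  qed
  show thesis
    using that[of p Q] inj leaves Q_sym Q_path common by simp
qed

lemma shallow_top_clique_card_le:
  assumes "r > 0" "quasi_bush B" "upwards_closed B" "\<forall>a. \<not> coat_hanger B a"
    and "linear_order_on (nodes B) le" "wcol (9 * r) B le \<le> m"
    and "\<forall>w\<in>nodes B. card (IN w B) \<le> m \<or> card (OUT w B) \<le> m"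
    and "has_shallow_top_clique B r n"
  shows "n \<le> 2 * (m * (m + 1)) + 1"
proof -
  obtain p Q where inj: "inj_on p {..<n}" and leaves: "\<And>a. a < n \<Longrightarrow> is_leaf B (p a)"
    and Q_sym: "\<And>a c. Q a c = Q c a"
    and Q_path: "\<And>a c. a < n \<Longrightarrow> c < n \<Longrightarrow> a \<noteq> c \<Longrightarrow>
       gpath B (Q a c) \<and> length (Q a c) \<le> 2 * r + 2 \<and> {hd (Q a c), last (Q a c)} = {p a, p c}"
    and Q_meet: "\<And>a c c'. a < n \<Longrightarrow> c < n \<Longrightarrow> c' < n \<Longrightarrow> a \<noteq> c \<Longrightarrow> a \<noteq> c' \<Longrightarrow> c \<noteq> c' \<Longrightarrow>
       set (Q a c) \<inter> set (Q a c') \<subseteq> {p a}"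
    using assms(8) by (rule shallow_top_clique_paths) (rule that)
  define good where "good a c \<longleftrightarrow> a \<noteq> c \<and> hits_thin_side B le (9 * r) (p a) (Q a c)" for a c
  have "good a c \<or> good c a" if ac: "a < n" "c < n" "a \<noteq> c" for a c
  proof -
    have path: "gpath B (Q a c)" and ends: "{hd (Q a c), last (Q a c)} = {p a, p c}"
      using Q_path[OF ac] by auto
    have "2 * length (Q a c) \<le> 9 * r + 1" using Q_path[OF ac] assms(1) by linarith
    moreover have "hd (Q a c) \<noteq> last (Q a c)"
      using ends inj ac by (auto simp: doubleton_eq_iff dest: inj_onD)
    ultimately have "hits_thin_side B le (9 * r) (hd (Q a c)) (Q a c) \<or>
        hits_thin_side B le (9 * r) (last (Q a c)) (Q a c)"
      by (rule path_hits_thin_side_at_an_end[OF assms(2-5) path])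
    then show ?thesis
      using ends Q_sym[of a c] ac(3) unfolding good_def by (auto simp: doubleton_eq_iff)
  qed
  moreover have "card {c \<in> {..<n}. good a c} \<le> m * (m + 1)" if "a < n" for a
    using leaves[OF that] Q_meet[OF that] unfolding good_def
    by (intro card_hits_thin_side_le[OF assms(2) _ assms(6,7)]) (auto intro: leaf_in_nodes)
  ultimately show ?thesis
    using semicomplete_card_le[of "{..<n}" good "m * (m + 1)"] by simp
qed

theorem lemma7p33:
  fixes r m :: nat and B :: "'a qbush" and le :: "('a \<times> 'a) set"
  assumes "r > 0" and "m > 0" and "m \<ge> 20 * r"
    and "quasi_bush B" and "represents_undirected B"
    and "upwards_closed B" and "\<forall>a. \<not> coat_hanger B a"
    and "linear_order_on (nodes B) le"
    and "wcol (9 * r) B le \<le> m"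
    and "\<forall>w\<in>nodes B. card (IN w B) \<le> m \<or> card (OUT w B) \<le> m"
  shows "\<not> has_shallow_top_clique B r (m ^ 7)"
proof
  assume "has_shallow_top_clique B r (m ^ 7)"
  then have "m ^ 7 \<le> 2 * (m * (m + 1)) + 1"
    using shallow_top_clique_card_le[OF assms(1,4,6,7,8,9,10)] by blast
  moreover have "2 \<le> m" using assms(1,3) by linarith
  ultimately show False using quadratic_lt_pow_seven by (simp add: not_le[symmetric])
qed

end
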